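(* Let $k\ge\ell\ge\ell'\ge t\ge1$ be integers and, for $i\in[2]$, let $\omega_i:[0,k]\to\mathbb{R}_{\ge0}$ be non-increasing functions. Let $\mathcal{F}\subseteq\{F\subseteq[k]:|F|\le\ell\}$ and $\mathcal{G}\subseteq\{G\subseteq[k]:|G|\le\ell'\}$ be non-empty cross $t$-intersecting families with maximal necessary intersection point $a$. Suppose that $a\ge t+1$, $\mathcal{F}\setminus\mathcal{F}^a\neq\emptyset$ and $\mathcal{G}\setminus\mathcal{G}^a\ne\emptyset$. Then there are families $\mathcal{F}^*\subseteq\{F\subseteq[k]:|F|\le\ell\}$ and $\mathcal{G}^*\subseteq\{G\subseteq[k]:|G|\le\ell'\}$ such that (1) $\mathcal{F}^*,\mathcal{G}^*$ are non-empty and cross $t$-intersecting; (2) $\omega_1(\mathcal{F}^* )+\omega_2(\mathcal{G}^* )\ge\omega_1(\mathcal{F})+\omega_2(\mathcal{G})$; (3) the maximal necessary intersection point of $\mathcal{F}^*$ and $\mathcal{G}^*$ is smaller than $a$. Moreover, (4) such $\mathcal{F}^*,\mathcal{G}^*$ satisfying (1)–(3) can be chosen to be shifted.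
   Context: Families are cross $t$-intersecting if $|F\cap G|\ge t$ for all $F\in\mathcal{F},G\in\mathcal{G}$. For cross $t$-intersecting $\mathcal{F},\mathcal{G}\subseteq2^{[k]}$, $a\in[k]$ is a necessary intersection point if there exist $F\in\mathcal{F},G\in\mathcal{G}$ with $|[a]\cap F\cap G|=t$ and $a\in F\cap G$; the maximal one is the largest such $a$. With $a$ the maximal necessary intersection point, $\mathcal{F}^a=\{F\in\mathcal{F}:\exists G\in\mathcal{G},\ |[a]\cap F\cap G|=t,\ a\in F\cap G\}$ and $\mathcal{G}^a=\{G\in\mathcal{G}:\exists F\in\mathcal{F},\ |[a]\cap F\cap G|=t,\ a\in F\cap G\}$. For $\omega:[0,k]\to\mathbb{R}_{\ge0}$, $\omega(F)=\omega(|F|)$ and $\omega(\mathcal{F})=\sum_{F\in\mathcal{F}}\omega(F)$; non-increasing means $\omega(i)\ge\omega(j)$ for $i\le j$. The shifting operator: for $i<j$, $s_{i,j}(F)=(F\setminus\{j\})\cup\{i\}$ if $j\in F$, $i\notin F$ and $(F\setminus\{j\})\cup\{i\}\notin\mathcal{F}$, else $s_{i,j}(F)=F$; $s_{i,j}(\mathcal{F})=\{s_{i,j}(F):F\in\mathcal{F}\}$. A family $\mathcal{F}\subseteq2^{[k]}$ is shifted if $s_{i,j}(\mathcal{F})=\mathcal{F}$ for all $1\le i<j\le k$. *)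

theory Defs
  imports Complex_Main
begin

definition cross_t_intersecting :: "nat \<Rightarrow> nat set set \<Rightarrow> nat set set \<Rightarrow> bool" where
  "cross_t_intersecting t \<F> \<G> \<longleftrightarrow> (\<forall>F\<in>\<F>. \<forall>G\<in>\<G>. card (F \<inter> G) \<ge> t)"

definition nec_point :: "nat \<Rightarrow> nat \<Rightarrow> nat set set \<Rightarrow> nat set set \<Rightarrow> nat \<Rightarrow> bool" where
  "nec_point k t \<F> \<G> a \<longleftrightarrow> a \<in> {1..k} \<and>
     (\<exists>F\<in>\<F>. \<exists>G\<in>\<G>. card ({1..a} \<inter> F \<inter> G) = t \<and> a \<in> F \<inter> G)"

definition max_nec_point :: "nat \<Rightarrow> nat \<Rightarrow> nat set set \<Rightarrow> nat set set \<Rightarrow> nat" where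
  "max_nec_point k t \<F> \<G> = Max {a. nec_point k t \<F> \<G> a}"

definition fam_a_F :: "nat \<Rightarrow> nat \<Rightarrow> nat set set \<Rightarrow> nat set set \<Rightarrow> nat set set" where
  "fam_a_F t a \<F> \<G> = {F\<in>\<F>. \<exists>G\<in>\<G>. card ({1..a} \<inter> F \<inter> G) = t \<and> a \<in> F \<inter> G}"

definition fam_a_G :: "nat \<Rightarrow> nat \<Rightarrow> nat set set \<Rightarrow> nat set set \<Rightarrow> nat set set" where
  "fam_a_G t a \<F> \<G> = {G\<in>\<G>. \<exists>F\<in>\<F>. card ({1..a} \<inter> F \<inter> G) = t \<and> a \<in> F \<inter> G}"

definition weight :: "(nat \<Rightarrow> real) \<Rightarrow> nat set set \<Rightarrow> real" where
  "weight \<omega> \<F> = (\<Sum>F\<in>\<F>. \<omega> (card F))"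

definition shift_set :: "nat set set \<Rightarrow> nat \<Rightarrow> nat \<Rightarrow> nat set \<Rightarrow> nat set" where
  "shift_set \<F> i j F =
     (if j \<in> F \<and> i \<notin> F \<and> insert i (F - {j}) \<notin> \<F> then insert i (F - {j}) else F)"

definition shift_fam :: "nat \<Rightarrow> nat \<Rightarrow> nat set set \<Rightarrow> nat set set" where
  "shift_fam i j \<F> = shift_set \<F> i j ` \<F>"

definition shifted :: "nat \<Rightarrow> nat set set \<Rightarrow> bool" where
  "shifted k \<F> \<longleftrightarrow> (\<forall>i j. 1 \<le> i \<and> i < j \<and> j \<le> k \<longrightarrow> shift_fam i j \<F> = \<F>)"

end

theory Submission
  imports Defs
begin

(* Since a is the maximal necessary intersection point, any F in \<F> and G in \<G> already
   share at least t points of [a].  If moreover G is not in \<G>^a, then a pair sharing a shares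
   more than t points of [a].  Hence deleting a from every member of \<F>^a and discarding \<G>^a
   leaves families that are cross t-intersecting inside [a - 1]: the sets F - {a} are new, and
   because \<omega>1 is non-increasing they weigh at least \<omega>1(\<F>^a).  Doing this, or the same with
   the roles of \<F> and \<G> exchanged, according to which of \<omega>2(\<G>^a) and \<omega>1(\<F>^a) is larger,
   does not decrease the total weight.  Cross t-intersection inside [a - 1] forces every
   necessary intersection point below a, and it survives the shifts s_{i,j}, which also preserve
   sizes and hence weights; each effective shift strictly decreases the sum of the elements of
   all members, so repeated shifting ends with shifted families. *)

abbreviation subsets_upto :: "nat \<Rightarrow> nat \<Rightarrow> nat set set" where
  "subsets_upto k l \<equiv> {F. F \<subseteq> {1..k} \<and> card F \<le> l}"

lemma finite_members_subsets_upto: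
  assumes "\<F> \<subseteq> subsets_upto k l"
  shows "\<forall>F\<in>\<F>. finite F"
proof
  fix F assume "F \<in> \<F>"
  then have "F \<subseteq> {1..k}" using assms by blast
  then show "finite F" by (rule finite_subset) simp
qed

definition cross_t_intersecting_on :: "nat set \<Rightarrow> nat \<Rightarrow> nat set set \<Rightarrow> nat set set \<Rightarrow> bool" where
  "cross_t_intersecting_on X t \<F> \<G> \<longleftrightarrow> (\<forall>F\<in>\<F>. \<forall>G\<in>\<G>. t \<le> card (X \<inter> F \<inter> G))"

lemma cross_t_intersecting_on_commute:
  "cross_t_intersecting_on X t \<G> \<F> \<longleftrightarrow> cross_t_intersecting_on X t \<F> \<G>"
proof -
  have "X \<inter> G \<inter> F = X \<inter> F \<inter> G" for F G :: "nat set" by blast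
  then show ?thesis unfolding cross_t_intersecting_on_def by metis
qed

lemma cross_t_intersecting_if_on:
  assumes "cross_t_intersecting_on X t \<F> \<G>" "\<forall>F\<in>\<F>. finite F"
  shows "cross_t_intersecting t \<F> \<G>"
  unfolding cross_t_intersecting_def
proof (intro ballI)
  fix F G assume "F \<in> \<F>" "G \<in> \<G>"
  then have "t \<le> card (X \<inter> F \<inter> G)" "finite F"
    using assms unfolding cross_t_intersecting_on_def by auto
  moreover have "card (X \<inter> F \<inter> G) \<le> card (F \<inter> G)"
    using \<open>finite F\<close> by (intro card_mono) auto
  ultimately show "t \<le> card (F \<inter> G)" by linarith
qed

lemma exists_prefix_card_eq:
  fixes S :: "nat set"
  assumes "S \<subseteq> {1..k}" "1 \<le> t" "t \<le> card S"
  shows "\<exists>x\<in>S. card ({1..x} \<inter> S) = t"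
proof -
  have fin: "finite S" using assms(1) by (rule finite_subset) simp
  define x where "x = (LEAST x. t \<le> card ({1..x} \<inter> S))"
  have "t \<le> card ({1..k} \<inter> S)" using assms by (simp add: Int_absorb1)
  then have reached: "t \<le> card ({1..x} \<inter> S)" unfolding x_def by (rule LeastI)
  then obtain z where z: "x = Suc z" using assms(2) by (cases x) auto
  have below: "card ({1..z} \<inter> S) < t"
    using not_less_Least[of z "\<lambda>x. t \<le> card ({1..x} \<inter> S)"] z unfolding x_def by simp
  have prefix: "{1..x} \<inter> S = (if x \<in> S then insert x ({1..z} \<inter> S) else {1..z} \<inter> S)"
    using z by (auto simp: le_Suc_eq)
  have "x \<in> S" using reached below prefix by (auto split: if_splits)
  moreover have "card ({1..x} \<inter> S) = Suc (card ({1..z} \<inter> S))"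
    using \<open>x \<in> S\<close> prefix z fin by simp
  ultimately show ?thesis using reached below by (intro bexI[of _ x]) auto
qed

lemma finite_nec_points: "finite {a. nec_point k t \<F> \<G> a}"
  by (rule finite_subset[of _ "{1..k}"]) (auto simp: nec_point_def)

lemma nec_point_in_inter:
  assumes "F \<in> \<F>" "G \<in> \<G>" "F \<subseteq> {1..k}" "1 \<le> t" "t \<le> card (F \<inter> G)"
  obtains x where "nec_point k t \<F> \<G> x" "card ({1..x} \<inter> F \<inter> G) = t"
proof -
  obtain x where x: "x \<in> F \<inter> G" "card ({1..x} \<inter> (F \<inter> G)) = t"
    using exists_prefix_card_eq[of "F \<inter> G" k t] assms(3-5) by blast
  then have "nec_point k t \<F> \<G> x"
    using assms(1-3) unfolding nec_point_def by (auto simp: Int_assoc)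
  with x show thesis by (simp add: Int_assoc that)
qed

lemma cross_t_intersecting_on_max_nec_point:
  assumes "\<forall>F\<in>\<F>. F \<subseteq> {1..k}" "1 \<le> t" "cross_t_intersecting t \<F> \<G>"
  shows "cross_t_intersecting_on {1..max_nec_point k t \<F> \<G>} t \<F> \<G>"
  unfolding cross_t_intersecting_on_def
proof (intro ballI)
  fix F G assume FG: "F \<in> \<F>" "G \<in> \<G>"
  then have "t \<le> card (F \<inter> G)" using assms(3) unfolding cross_t_intersecting_def by blast
  then obtain x where x: "nec_point k t \<F> \<G> x" "card ({1..x} \<inter> F \<inter> G) = t"
    using nec_point_in_inter FG assms(1,2) by metis
  have "x \<le> max_nec_point k t \<F> \<G>"
    unfolding max_nec_point_def using x(1) finite_nec_points by (intro Max_ge) auto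
  then have "card ({1..x} \<inter> F \<inter> G) \<le> card ({1..max_nec_point k t \<F> \<G>} \<inter> F \<inter> G)"
    by (intro card_mono) auto
  with x(2) show "t \<le> card ({1..max_nec_point k t \<F> \<G>} \<inter> F \<inter> G)" by simp
qed

lemma max_nec_point_le:
  assumes "\<forall>F\<in>\<F>. F \<subseteq> {1..k}" "\<F> \<noteq> {}" "\<G> \<noteq> {}" "1 \<le> t"
    and cross: "cross_t_intersecting_on {1..m} t \<F> \<G>"
  shows "max_nec_point k t \<F> \<G> \<le> m"
proof -
  have "cross_t_intersecting t \<F> \<G>"
    using cross assms(1) by (intro cross_t_intersecting_if_on) (auto intro: finite_subset)
  moreover obtain F G where "F \<in> \<F>" "G \<in> \<G>" using assms(2,3) by blast
  ultimately obtain x where "nec_point k t \<F> \<G> x"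
    using nec_point_in_inter assms(1,4) unfolding cross_t_intersecting_def by metis
  moreover have "b \<le> m" if b: "nec_point k t \<F> \<G> b" for b
  proof (rule ccontr)
    assume "\<not> b \<le> m"
    obtain F G where FG: "F \<in> \<F>" "G \<in> \<G>" "card ({1..b} \<inter> F \<inter> G) = t" "b \<in> F \<inter> G"
      using b unfolding nec_point_def by blast
    have "t \<le> card ({1..m} \<inter> F \<inter> G)" using cross FG(1,2) unfolding cross_t_intersecting_on_def by blast
    also have "\<dots> < card (insert b ({1..m} \<inter> F \<inter> G))" using \<open>\<not> b \<le> m\<close> by simp
    also have "\<dots> \<le> card ({1..b} \<inter> F \<inter> G)"
      using \<open>\<not> b \<le> m\<close> FG(4) by (intro card_mono) auto
    finally show False using FG(3) by simp
  qed
  ultimately show ?thesis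
    unfolding max_nec_point_def using finite_nec_points by (intro Max.boundedI) auto
qed

lemma shift_set_cases:
  obtains "shift_set \<F> i j F = F" "j \<in> F \<and> i \<notin> F \<longrightarrow> insert i (F - {j}) \<in> \<F>"
  | "shift_set \<F> i j F = insert i (F - {j})" "j \<in> F" "i \<notin> F" "insert i (F - {j}) \<notin> \<F>"
  unfolding shift_set_def by (cases "j \<in> F \<and> i \<notin> F \<and> insert i (F - {j}) \<notin> \<F>") auto

lemma card_shift_set:
  assumes "finite F" "i \<noteq> j"
  shows "card (shift_set \<F> i j F) = card F"
proof (cases rule: shift_set_cases[of \<F> i j F])
  case 2
  then have "card (shift_set \<F> i j F) = Suc (card (F - {j}))" using assms by simp
  also have "\<dots> = card F" using 2 assms(1) by (metis card.remove)
  finally show ?thesis .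
qed simp

lemma shift_set_subset:
  assumes "F \<subseteq> {1..k}" "i \<in> {1..k}"
  shows "shift_set \<F> i j F \<subseteq> {1..k}"
  by (cases rule: shift_set_cases[of \<F> i j F]) (use assms in auto)

lemma inj_on_shift_set:
  assumes "i \<noteq> j"
  shows "inj_on (shift_set \<F> i j) \<F>"
proof (rule inj_onI)
  fix F G assume FG: "F \<in> \<F>" "G \<in> \<F>" and eq: "shift_set \<F> i j F = shift_set \<F> i j G"
  have restore: "H = insert j (insert i (H - {j}) - {i})" if "j \<in> H" "i \<notin> H" for H
    using that assms by auto
  show "F = G"
    by (cases rule: shift_set_cases[of \<F> i j F]; cases rule: shift_set_cases[of \<F> i j G])
      (use FG eq restore in metis)+
qed

lemma card_le_card_exchange:
  assumes "finite Q" "P - {j} \<subseteq> Q" "j \<in> P \<Longrightarrow> i \<in> Q - P"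
  shows "card P \<le> card Q"
proof (cases "j \<in> P")
  case True
  have "P \<subseteq> insert j Q" using assms(2) by blast
  then have "finite P" by (rule finite_subset) (simp add: assms(1))
  then have "card P = card (insert i (P - {j}))"
    using True assms(3) by (metis DiffE card_Suc_Diff1 card_insert_disjoint finite_Diff)
  also have "\<dots> \<le> card Q" using True assms by (intro card_mono) auto
  finally show ?thesis .
next
  case False
  then show ?thesis using assms by (intro card_mono) auto
qed

lemma shift_set_cross_one_side:
  assumes cross: "cross_t_intersecting_on X t \<F> \<G>" and "finite X" "j \<in> X \<Longrightarrow> i \<in> X"
    and F: "F \<in> \<F>" "j \<in> F" "i \<notin> F"
    and G: "G \<in> \<G>" "j \<in> G \<and> i \<notin> G \<longrightarrow> insert i (G - {j}) \<in> \<G>"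
  shows "t \<le> card (X \<inter> insert i (F - {j}) \<inter> G)"
proof (cases "j \<in> G \<and> i \<notin> G")
  case True
  \<comment> \<open>G was not moved because its shift already lies in \<G>, and F meets that shift as the shift of F meets G.\<close>
  then have "X \<inter> insert i (F - {j}) \<inter> G = X \<inter> F \<inter> insert i (G - {j})" using F by auto
  with True show ?thesis using cross F(1) G unfolding cross_t_intersecting_on_def by simp
next
  case False
  have "card (X \<inter> F \<inter> G) \<le> card (X \<inter> insert i (F - {j}) \<inter> G)"
    by (rule card_le_card_exchange[where i = i and j = j]) (use False F assms(2,3) in auto)
  moreover have "t \<le> card (X \<inter> F \<inter> G)" using cross F(1) G(1) unfolding cross_t_intersecting_on_def by blast
  ultimately show ?thesis by linarith
qed

lemma shift_set_cross:
  assumes cross: "cross_t_intersecting_on X t \<F> \<G>" and X: "finite X" "j \<in> X \<Longrightarrow> i \<in> X"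
    and F: "F \<in> \<F>" and G: "G \<in> \<G>"
  shows "t \<le> card (X \<inter> shift_set \<F> i j F \<inter> shift_set \<G> i j G)"
proof -
  have cross': "cross_t_intersecting_on X t \<G> \<F>"
    using cross by (simp add: cross_t_intersecting_on_commute)
  show ?thesis
  proof (cases rule: shift_set_cases[of \<F> i j F])
    case F_fixed: 1
    show ?thesis
    proof (cases rule: shift_set_cases[of \<G> i j G])
      case 1
      then show ?thesis using cross F G F_fixed unfolding cross_t_intersecting_on_def by simp
    next
      case 2
      have "t \<le> card (X \<inter> insert i (G - {j}) \<inter> F)"
        using shift_set_cross_one_side[OF cross' X] G F F_fixed 2 by blast
      then show ?thesis using F_fixed 2 by (simp add: Int_ac)
    qed
  next
    case F_moved: 2
    show ?thesis
    proof (cases rule: shift_set_cases[of \<G> i j G])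
      case 1
      then show ?thesis using shift_set_cross_one_side[OF cross X] F G F_moved by simp
    next
      case 2
      have "card (X \<inter> F \<inter> G) \<le> card (X \<inter> insert i (F - {j}) \<inter> insert i (G - {j}))"
        by (rule card_le_card_exchange[where i = i and j = j]) (use X F_moved 2 in auto)
      moreover have "t \<le> card (X \<inter> F \<inter> G)" using cross F G unfolding cross_t_intersecting_on_def by blast
      ultimately show ?thesis using F_moved 2 by simp
    qed
  qed
qed

lemma cross_t_intersecting_on_shift_fam:
  assumes "cross_t_intersecting_on X t \<F> \<G>" "finite X" "j \<in> X \<Longrightarrow> i \<in> X"
  shows "cross_t_intersecting_on X t (shift_fam i j \<F>) (shift_fam i j \<G>)"
  using shift_set_cross[OF assms] unfolding cross_t_intersecting_on_def shift_fam_def by blast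

lemma weight_shift_fam:
  assumes "\<forall>F\<in>\<F>. finite F" "i \<noteq> j"
  shows "weight \<omega> (shift_fam i j \<F>) = weight \<omega> \<F>"
proof -
  have "weight \<omega> (shift_fam i j \<F>) = (\<Sum>F\<in>\<F>. \<omega> (card (shift_set \<F> i j F)))"
    unfolding weight_def shift_fam_def using inj_on_shift_set[OF assms(2)] by (simp add: sum.reindex)
  also have "\<dots> = weight \<omega> \<F>"
    unfolding weight_def using assms by (intro sum.cong) (auto simp: card_shift_set)
  finally show ?thesis .
qed

lemma shift_fam_subsets_upto:
  assumes "\<F> \<subseteq> subsets_upto k l" "i \<in> {1..k}" "i \<noteq> j"
  shows "shift_fam i j \<F> \<subseteq> subsets_upto k l"
proof
  fix F' assume "F' \<in> shift_fam i j \<F>"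
  then obtain F where F: "F \<in> \<F>" "F' = shift_set \<F> i j F" unfolding shift_fam_def by blast
  then have "F \<subseteq> {1..k}" "card F \<le> l" using assms(1) by auto
  moreover have "finite F" using finite_subset[OF \<open>F \<subseteq> {1..k}\<close>] by simp
  ultimately show "F' \<in> subsets_upto k l"
    using F(2) shift_set_subset[of F k i] card_shift_set[of F i j] assms(2,3) by simp
qed

lemma shift_fam_eq_empty_iff [simp]: "shift_fam i j \<F> = {} \<longleftrightarrow> \<F> = {}"
  by (simp add: shift_fam_def)

definition elem_sum :: "nat set set \<Rightarrow> nat" where
  "elem_sum \<F> = (\<Sum>F\<in>\<F>. \<Sum>F)"

lemma sum_shift_set_less:
  assumes "finite F" "i < j" "shift_set \<F> i j F \<noteq> F"
  shows "\<Sum>(shift_set \<F> i j F) < \<Sum>F"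
proof (cases rule: shift_set_cases[of \<F> i j F])
  case 2
  then have "\<Sum>(shift_set \<F> i j F) = i + \<Sum>(F - {j})" using assms(1) by simp
  also have "\<dots> < j + \<Sum>(F - {j})" using assms(2) by simp
  also have "\<dots> = \<Sum>F" using 2 assms(1) by (simp add: sum.remove)
  finally show ?thesis .
qed (use assms in simp)

lemma elem_sum_shift_fam:
  assumes "i \<noteq> j"
  shows "elem_sum (shift_fam i j \<F>) = (\<Sum>F\<in>\<F>. \<Sum>(shift_set \<F> i j F))"
  unfolding elem_sum_def shift_fam_def using inj_on_shift_set[OF assms] by (simp add: sum.reindex)

lemma elem_sum_shift_fam_le:
  assumes "\<forall>F\<in>\<F>. finite F" "i < j"
  shows "elem_sum (shift_fam i j \<F>) \<le> elem_sum \<F>"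
proof -
  have "\<Sum>(shift_set \<F> i j F) \<le> \<Sum>F" if "F \<in> \<F>" for F
    using sum_shift_set_less[of F i j \<F>] that assms by fastforce
  then show ?thesis
    using elem_sum_shift_fam[of i j \<F>] assms(2) unfolding elem_sum_def[of \<F>] by (simp add: sum_mono)
qed

lemma elem_sum_shift_fam_less:
  assumes "finite \<F>" "\<forall>F\<in>\<F>. finite F" "i < j" "shift_fam i j \<F> \<noteq> \<F>"
  shows "elem_sum (shift_fam i j \<F>) < elem_sum \<F>"
proof -
  obtain F where F: "F \<in> \<F>" "shift_set \<F> i j F \<noteq> F"
    using assms(4) unfolding shift_fam_def by (metis (no_types, lifting) image_cong image_ident)
  have "\<Sum>(shift_set \<F> i j F) \<le> \<Sum>F" if "F \<in> \<F>" for F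
    using sum_shift_set_less[of F i j \<F>] that assms(2,3) by fastforce
  moreover have "\<Sum>(shift_set \<F> i j F) < \<Sum>F" using F assms(2,3) by (simp add: sum_shift_set_less)
  ultimately have "(\<Sum>F\<in>\<F>. \<Sum>(shift_set \<F> i j F)) < (\<Sum>F\<in>\<F>. \<Sum>F)"
    using assms(1) F(1) by (intro sum_strict_mono_ex1) auto
  then show ?thesis using elem_sum_shift_fam[of i j \<F>] assms(3) unfolding elem_sum_def[of \<F>] by simp
qed

lemma exists_shifted_pair:
  assumes "P \<F> \<G>"
    and sub: "\<And>\<F> \<G>. P \<F> \<G> \<Longrightarrow> \<F> \<subseteq> Pow {1..k} \<and> \<G> \<subseteq> Pow {1..k}"
    and shift: "\<And>\<F> \<G> i j. P \<F> \<G> \<Longrightarrow> 1 \<le> i \<Longrightarrow> i < j \<Longrightarrow> j \<le> k \<Longrightarrow>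
                  P (shift_fam i j \<F>) (shift_fam i j \<G>)"
  shows "\<exists>\<F>' \<G>'. P \<F>' \<G>' \<and> shifted k \<F>' \<and> shifted k \<G>'"
  using assms(1)
proof (induction "elem_sum \<F> + elem_sum \<G>" arbitrary: \<F> \<G> rule: less_induct)
  case less
  show ?case
  proof (cases "shifted k \<F> \<and> shifted k \<G>")
    case True
    with less.prems show ?thesis by blast
  next
    case False
    then obtain i j where ij: "1 \<le> i" "i < j" "j \<le> k"
      and moved: "shift_fam i j \<F> \<noteq> \<F> \<or> shift_fam i j \<G> \<noteq> \<G>"
      unfolding shifted_def by blast
    have "finite \<F>" "\<forall>F\<in>\<F>. finite F" "finite \<G>" "\<forall>G\<in>\<G>. finite G"
      using sub[OF less.prems] by (auto intro: finite_subset)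
    then have "elem_sum (shift_fam i j \<F>) + elem_sum (shift_fam i j \<G>) < elem_sum \<F> + elem_sum \<G>"
      using elem_sum_shift_fam_le[of _ i j] elem_sum_shift_fam_less[of _ i j] ij(2) moved
      by (meson add_less_le_mono add_le_less_mono)
    then show ?thesis using less.hyps shift[OF less.prems ij] by blast
  qed
qed

lemma exists_shifted_pair_subsets_upto:
  assumes "\<F> \<subseteq> subsets_upto k l" "\<G> \<subseteq> subsets_upto k l'" "\<F> \<noteq> {}" "\<G> \<noteq> {}"
    and "cross_t_intersecting_on {1..m} t \<F> \<G>"
  shows "\<exists>\<F>' \<G>'. \<F>' \<subseteq> subsets_upto k l \<and> \<G>' \<subseteq> subsets_upto k l' \<and> \<F>' \<noteq> {} \<and> \<G>' \<noteq> {} \<and>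
           cross_t_intersecting_on {1..m} t \<F>' \<G>' \<and>
           (\<forall>\<omega>. weight \<omega> \<F>' = weight \<omega> \<F>) \<and> (\<forall>\<omega>. weight \<omega> \<G>' = weight \<omega> \<G>) \<and>
           shifted k \<F>' \<and> shifted k \<G>'"
proof -
  define P where "P \<F>' \<G>' \<longleftrightarrow> \<F>' \<subseteq> subsets_upto k l \<and> \<G>' \<subseteq> subsets_upto k l' \<and> \<F>' \<noteq> {} \<and> \<G>' \<noteq> {} \<and>
    cross_t_intersecting_on {1..m} t \<F>' \<G>' \<and>
    (\<forall>\<omega>. weight \<omega> \<F>' = weight \<omega> \<F>) \<and> (\<forall>\<omega>. weight \<omega> \<G>' = weight \<omega> \<G>)" for \<F>' \<G>'
  have "P \<F> \<G>" unfolding P_def using assms by simp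
  moreover have "P \<F>' \<G>' \<Longrightarrow> \<F>' \<subseteq> Pow {1..k} \<and> \<G>' \<subseteq> Pow {1..k}" for \<F>' \<G>'
    unfolding P_def by blast
  moreover have "P (shift_fam i j \<F>') (shift_fam i j \<G>')"
    if P: "P \<F>' \<G>'" and ij: "1 \<le> i" "i < j" "j \<le> k" for \<F>' \<G>' i j
  proof -
    have sub: "\<F>' \<subseteq> subsets_upto k l" "\<G>' \<subseteq> subsets_upto k l'"
      and cross: "cross_t_intersecting_on {1..m} t \<F>' \<G>'" using P unfolding P_def by simp_all
    have i: "i \<in> {1..k}" "i \<noteq> j" using ij by auto
    have "cross_t_intersecting_on {1..m} t (shift_fam i j \<F>') (shift_fam i j \<G>')"
      using cross ij(1,2) by (intro cross_t_intersecting_on_shift_fam) auto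
    moreover have "weight \<omega> (shift_fam i j \<F>') = weight \<omega> \<F>'" "weight \<omega> (shift_fam i j \<G>') = weight \<omega> \<G>'"
      for \<omega> using sub i(2) by (simp_all add: weight_shift_fam finite_members_subsets_upto)
    ultimately show ?thesis
      using P shift_fam_subsets_upto[OF sub(1) i] shift_fam_subsets_upto[OF sub(2) i] unfolding P_def by simp
  qed
  ultimately have "\<exists>\<F>' \<G>'. P \<F>' \<G>' \<and> shifted k \<F>' \<and> shifted k \<G>'" by (rule exists_shifted_pair)
  then show ?thesis unfolding P_def by blast
qed

lemma fam_a_swap: "fam_a_F t a \<G> \<F> = fam_a_G t a \<F> \<G>" "fam_a_G t a \<G> \<F> = fam_a_F t a \<F> \<G>"
  unfolding fam_a_F_def fam_a_G_def by (auto simp: Int_ac)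

lemma minus_point_notin_fam:
  assumes cross: "cross_t_intersecting_on {1..a} t \<F> \<G>" and "1 \<le> t" "F \<in> fam_a_F t a \<F> \<G>"
  shows "F - {a} \<notin> \<F>"
proof
  assume "F - {a} \<in> \<F>"
  obtain G where G: "G \<in> \<G>" "card ({1..a} \<inter> F \<inter> G) = t" "a \<in> F \<inter> G"
    using assms(3) unfolding fam_a_F_def by blast
  then have "a \<in> {1..a}" using assms(2) by (cases a) auto
  moreover have "{1..a} \<inter> (F - {a}) \<inter> G = ({1..a} \<inter> F \<inter> G) - {a}" by auto
  ultimately have "card ({1..a} \<inter> (F - {a}) \<inter> G) = t - 1"
    using G by (simp add: card_Diff_singleton)
  moreover have "t \<le> card ({1..a} \<inter> (F - {a}) \<inter> G)"
    using cross \<open>F - {a} \<in> \<F>\<close> G(1) unfolding cross_t_intersecting_on_def by blast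
  ultimately show False using assms(2) by simp
qed

lemma cross_t_intersecting_on_drop_point:
  assumes cross: "cross_t_intersecting_on {1..a} t \<F> \<G>"
  shows "cross_t_intersecting_on {1..a - 1} t
           (\<F> \<union> (\<lambda>F. F - {a}) ` fam_a_F t a \<F> \<G>) (\<G> - fam_a_G t a \<F> \<G>)"
proof -
  have below: "t \<le> card ({1..a - 1} \<inter> F \<inter> G)"
    if F: "F \<in> \<F>" and G: "G \<in> \<G> - fam_a_G t a \<F> \<G>" for F G
  proof (cases "a \<in> F \<inter> G \<and> 1 \<le> a")
    case True
    have "t \<le> card ({1..a} \<inter> F \<inter> G)" using cross F G unfolding cross_t_intersecting_on_def by blast
    moreover have "card ({1..a} \<inter> F \<inter> G) \<noteq> t" using F G True unfolding fam_a_G_def by blast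
    moreover have "{1..a - 1} \<inter> F \<inter> G = ({1..a} \<inter> F \<inter> G) - {a}" by auto
    ultimately show ?thesis using True by (simp add: card_Diff_singleton)
  next
    case False
    then have "{1..a - 1} \<inter> F \<inter> G = {1..a} \<inter> F \<inter> G" by (cases a) (auto simp: le_Suc_eq)
    then show ?thesis using cross F G unfolding cross_t_intersecting_on_def by simp
  qed
  have "{1..a - 1} \<inter> (F - {a}) \<inter> G = {1..a - 1} \<inter> F \<inter> G" for F G :: "nat set" by auto
  then show ?thesis using below unfolding cross_t_intersecting_on_def fam_a_F_def by auto
qed

lemma weight_image_minus_point_ge:
  assumes mono: "\<forall>i j. i \<le> j \<and> j \<le> k \<longrightarrow> \<omega> i \<ge> \<omega> j" and \<E>: "\<forall>F\<in>\<E>. a \<in> F \<and> F \<subseteq> {1..k}"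
  shows "weight \<omega> \<E> \<le> weight \<omega> ((\<lambda>F. F - {a}) ` \<E>)"
proof -
  have "inj_on (\<lambda>F. F - {a}) \<E>" using \<E> by (intro inj_onI) (metis insert_Diff)
  then have "weight \<omega> ((\<lambda>F. F - {a}) ` \<E>) = (\<Sum>F\<in>\<E>. \<omega> (card (F - {a})))"
    unfolding weight_def by (simp add: sum.reindex)
  moreover have "\<omega> (card F) \<le> \<omega> (card (F - {a}))" if "F \<in> \<E>" for F
  proof -
    have "card F \<le> k" using \<E> that card_mono[of "{1..k}" F] by simp
    then show ?thesis using mono card_Diff1_le[of F a] by blast
  qed
  ultimately show ?thesis unfolding weight_def by (simp add: sum_mono)
qed

lemma weight_drop_point_ge:
  assumes "\<F> \<subseteq> Pow {1..k}" "\<G> \<subseteq> Pow {1..k}" "cross_t_intersecting_on {1..a} t \<F> \<G>" "1 \<le> t"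
    and mono: "\<forall>i j. i \<le> j \<and> j \<le> k \<longrightarrow> \<omega>1 i \<ge> \<omega>1 j"
  shows "weight \<omega>1 \<F> + weight \<omega>2 \<G> + (weight \<omega>1 (fam_a_F t a \<F> \<G>) - weight \<omega>2 (fam_a_G t a \<F> \<G>))
           \<le> weight \<omega>1 (\<F> \<union> (\<lambda>F. F - {a}) ` fam_a_F t a \<F> \<G>) + weight \<omega>2 (\<G> - fam_a_G t a \<F> \<G>)"
proof -
  define \<F>\<^sub>a where "\<F>\<^sub>a = fam_a_F t a \<F> \<G>"
  define \<G>\<^sub>a where "\<G>\<^sub>a = fam_a_G t a \<F> \<G>"
  have fin: "finite \<F>" "finite \<G>" using assms(1,2) by (auto intro: finite_subset)
  have sub: "\<F>\<^sub>a \<subseteq> \<F>" "\<G>\<^sub>a \<subseteq> \<G>" unfolding \<F>\<^sub>a_def \<G>\<^sub>a_def fam_a_F_def fam_a_G_def by auto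
  have "\<F> \<inter> (\<lambda>F. F - {a}) ` \<F>\<^sub>a = {}"
    using minus_point_notin_fam[OF assms(3,4)] unfolding \<F>\<^sub>a_def by blast
  then have "weight \<omega>1 (\<F> \<union> (\<lambda>F. F - {a}) ` \<F>\<^sub>a) = weight \<omega>1 \<F> + weight \<omega>1 ((\<lambda>F. F - {a}) ` \<F>\<^sub>a)"
    unfolding weight_def using fin sub by (intro sum.union_disjoint) (auto intro: finite_subset)
  moreover have "weight \<omega>2 (\<G> - \<G>\<^sub>a) = weight \<omega>2 \<G> - weight \<omega>2 \<G>\<^sub>a"
    unfolding weight_def using fin sub by (simp add: sum_diff)
  moreover have "weight \<omega>1 \<F>\<^sub>a \<le> weight \<omega>1 ((\<lambda>F. F - {a}) ` \<F>\<^sub>a)"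
    using mono assms(1) sub unfolding \<F>\<^sub>a_def fam_a_F_def by (intro weight_image_minus_point_ge) auto
  ultimately show ?thesis unfolding \<F>\<^sub>a_def \<G>\<^sub>a_def by linarith
qed

lemma exists_pair_below_point_one_side:
  assumes \<F>: "\<F> \<subseteq> subsets_upto k l" "\<F> \<noteq> {}" and \<G>: "\<G> \<subseteq> subsets_upto k l'" "\<G> - fam_a_G t a \<F> \<G> \<noteq> {}"
    and cross: "cross_t_intersecting_on {1..a} t \<F> \<G>" and "1 \<le> t"
    and mono: "\<forall>i j. i \<le> j \<and> j \<le> k \<longrightarrow> \<omega>1 i \<ge> \<omega>1 j"
    and less_weight: "weight \<omega>2 (fam_a_G t a \<F> \<G>) \<le> weight \<omega>1 (fam_a_F t a \<F> \<G>)"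
  shows "\<exists>\<F>' \<G>'. \<F>' \<subseteq> subsets_upto k l \<and> \<G>' \<subseteq> subsets_upto k l' \<and> \<F>' \<noteq> {} \<and> \<G>' \<noteq> {} \<and>
           cross_t_intersecting_on {1..a - 1} t \<F>' \<G>' \<and>
           weight \<omega>1 \<F> + weight \<omega>2 \<G> \<le> weight \<omega>1 \<F>' + weight \<omega>2 \<G>'"
proof (intro exI conjI)
  let ?\<F>' = "\<F> \<union> (\<lambda>F. F - {a}) ` fam_a_F t a \<F> \<G>" and ?\<G>' = "\<G> - fam_a_G t a \<F> \<G>"
  have "F - {a} \<in> subsets_upto k l" if "F \<in> \<F>" for F
    using \<F>(1) that card_Diff1_le[of F a] by auto
  then show "?\<F>' \<subseteq> subsets_upto k l" using \<F>(1) unfolding fam_a_F_def by blast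
  show "?\<G>' \<subseteq> subsets_upto k l'" "?\<F>' \<noteq> {}" "?\<G>' \<noteq> {}" using \<F> \<G> by auto
  show "cross_t_intersecting_on {1..a - 1} t ?\<F>' ?\<G>'"
    using cross by (rule cross_t_intersecting_on_drop_point)
  have "\<F> \<subseteq> Pow {1..k}" "\<G> \<subseteq> Pow {1..k}" using \<F>(1) \<G>(1) by auto
  from weight_drop_point_ge[OF this cross \<open>1 \<le> t\<close> mono, of \<omega>2] less_weight
  show "weight \<omega>1 \<F> + weight \<omega>2 \<G> \<le> weight \<omega>1 ?\<F>' + weight \<omega>2 ?\<G>'" by linarith
qed

lemma exists_pair_below_point:
  assumes \<F>: "\<F> \<subseteq> subsets_upto k l" "\<F> - fam_a_F t a \<F> \<G> \<noteq> {}"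
    and \<G>: "\<G> \<subseteq> subsets_upto k l'" "\<G> - fam_a_G t a \<F> \<G> \<noteq> {}"
    and cross: "cross_t_intersecting_on {1..a} t \<F> \<G>" and "1 \<le> t"
    and mono1: "\<forall>i j. i \<le> j \<and> j \<le> k \<longrightarrow> \<omega>1 i \<ge> \<omega>1 j"
    and mono2: "\<forall>i j. i \<le> j \<and> j \<le> k \<longrightarrow> \<omega>2 i \<ge> \<omega>2 j"
  shows "\<exists>\<F>' \<G>'. \<F>' \<subseteq> subsets_upto k l \<and> \<G>' \<subseteq> subsets_upto k l' \<and> \<F>' \<noteq> {} \<and> \<G>' \<noteq> {} \<and>
           cross_t_intersecting_on {1..a - 1} t \<F>' \<G>' \<and>
           weight \<omega>1 \<F> + weight \<omega>2 \<G> \<le> weight \<omega>1 \<F>' + weight \<omega>2 \<G>'"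
proof (cases "weight \<omega>2 (fam_a_G t a \<F> \<G>) \<le> weight \<omega>1 (fam_a_F t a \<F> \<G>)")
  case True
  have "\<F> \<noteq> {}" using \<F>(2) by blast
  with True show ?thesis using assms by (intro exists_pair_below_point_one_side) auto
next
  case False
  have "\<G> \<noteq> {}" using \<G>(2) by blast
  moreover note \<G>(1) \<F>(1)
  moreover have "\<F> - fam_a_G t a \<G> \<F> \<noteq> {}" "weight \<omega>1 (fam_a_G t a \<G> \<F>) \<le> weight \<omega>2 (fam_a_F t a \<G> \<F>)"
    using \<F>(2) False by (simp_all add: fam_a_swap[of t a \<F> \<G>])
  moreover have "cross_t_intersecting_on {1..a} t \<G> \<F>"
    using cross by (simp add: cross_t_intersecting_on_commute)
  ultimately obtain \<G>' \<F>' where "\<G>' \<subseteq> subsets_upto k l'" "\<F>' \<subseteq> subsets_upto k l" "\<G>' \<noteq> {}" "\<F>' \<noteq> {}"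
      "cross_t_intersecting_on {1..a - 1} t \<G>' \<F>'"
      "weight \<omega>2 \<G> + weight \<omega>1 \<F> \<le> weight \<omega>2 \<G>' + weight \<omega>1 \<F>'"
    using exists_pair_below_point_one_side[of \<G> k l' \<F> l t a \<omega>2 \<omega>1] \<open>1 \<le> t\<close> mono2 by blast
  then show ?thesis by (intro exI[of _ \<F>'] exI[of _ \<G>']) (simp add: cross_t_intersecting_on_commute)
qed

theorem lemma3p5:
  fixes k l l' t a :: nat and \<omega>1 \<omega>2 :: "nat \<Rightarrow> real" and \<F> \<G> :: "nat set set"
  assumes "k \<ge> l" "l \<ge> l'" "l' \<ge> t" "t \<ge> 1"
    and "\<forall>i\<le>k. \<omega>1 i \<ge> 0" "\<forall>i\<le>k. \<omega>2 i \<ge> 0"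
    and "\<forall>i j. i \<le> j \<and> j \<le> k \<longrightarrow> \<omega>1 i \<ge> \<omega>1 j"
    and "\<forall>i j. i \<le> j \<and> j \<le> k \<longrightarrow> \<omega>2 i \<ge> \<omega>2 j"
    and "\<F> \<subseteq> {F. F \<subseteq> {1..k} \<and> card F \<le> l}"
    and "\<G> \<subseteq> {G. G \<subseteq> {1..k} \<and> card G \<le> l'}"
    and "\<F> \<noteq> {}" "\<G> \<noteq> {}"
    and "cross_t_intersecting t \<F> \<G>"
    and "a = max_nec_point k t \<F> \<G>"
    and "a \<ge> t + 1"
    and "\<F> - fam_a_F t a \<F> \<G> \<noteq> {}"
    and "\<G> - fam_a_G t a \<F> \<G> \<noteq> {}"
  shows "\<exists>\<F>s \<G>s.
           \<F>s \<subseteq> {F. F \<subseteq> {1..k} \<and> card F \<le> l} \<and>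
           \<G>s \<subseteq> {G. G \<subseteq> {1..k} \<and> card G \<le> l'} \<and>
           \<F>s \<noteq> {} \<and> \<G>s \<noteq> {} \<and> cross_t_intersecting t \<F>s \<G>s \<and>
           weight \<omega>1 \<F>s + weight \<omega>2 \<G>s \<ge> weight \<omega>1 \<F> + weight \<omega>2 \<G> \<and>
           max_nec_point k t \<F>s \<G>s < a \<and>
           shifted k \<F>s \<and> shifted k \<G>s"
proof -
  have "cross_t_intersecting_on {1..a} t \<F> \<G>"
    using cross_t_intersecting_on_max_nec_point[of \<F> k t \<G>] assms(4,9,13,14) by auto
  then obtain \<F>\<^sub>1 \<G>\<^sub>1 where pair1: "\<F>\<^sub>1 \<subseteq> subsets_upto k l" "\<G>\<^sub>1 \<subseteq> subsets_upto k l'" "\<F>\<^sub>1 \<noteq> {}" "\<G>\<^sub>1 \<noteq> {}"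
      "cross_t_intersecting_on {1..a - 1} t \<F>\<^sub>1 \<G>\<^sub>1"
      and weight1: "weight \<omega>1 \<F> + weight \<omega>2 \<G> \<le> weight \<omega>1 \<F>\<^sub>1 + weight \<omega>2 \<G>\<^sub>1"
    using exists_pair_below_point[OF assms(9,16,10,17) _ assms(4,7,8)] by blast
  obtain \<F>\<^sub>2 \<G>\<^sub>2 where sub: "\<F>\<^sub>2 \<subseteq> subsets_upto k l" "\<G>\<^sub>2 \<subseteq> subsets_upto k l'"
      and ne: "\<F>\<^sub>2 \<noteq> {}" "\<G>\<^sub>2 \<noteq> {}" and cross: "cross_t_intersecting_on {1..a - 1} t \<F>\<^sub>2 \<G>\<^sub>2"
      and "weight \<omega>1 \<F>\<^sub>2 = weight \<omega>1 \<F>\<^sub>1" "weight \<omega>2 \<G>\<^sub>2 = weight \<omega>2 \<G>\<^sub>1"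
      and "shifted k \<F>\<^sub>2" "shifted k \<G>\<^sub>2"
    using exists_shifted_pair_subsets_upto[OF pair1] by blast
  moreover have "max_nec_point k t \<F>\<^sub>2 \<G>\<^sub>2 \<le> a - 1"
    using sub ne cross assms(4) by (intro max_nec_point_le) auto
  moreover have "cross_t_intersecting t \<F>\<^sub>2 \<G>\<^sub>2"
    using cross finite_members_subsets_upto[OF sub(1)] by (rule cross_t_intersecting_if_on)
  ultimately show ?thesis using weight1 assms(15) by (intro exI[of _ \<F>\<^sub>2] exI[of _ \<G>\<^sub>2]) auto
qed

end
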